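(* Let $\bm\mu=(\mu_1,\dots,\mu_r)$ be finite positive Borel measures on the unit circle with infinite supports and $\bm n,\bm m\in\mathbb N^r$. Then $(\bm n,\bm m)$ is normal if and only if $(\bm m,\bm n)$ is normal, and in that case $\Phi_{\bm n,\bm m}^\sharp=\Phi^*_{\bm m,\bm n}$, where $\Phi^\sharp(z)=\overline{\Phi(1/\bar z)}$.
   Context: $|\bm n|=\sum_j n_j$. The pair $(\bm n,\bm m)$ is normal if there is a unique Laurent polynomial $\Phi_{\bm n,\bm m}\in\operatorname{span}\{z^p:-|\bm m|\le p\le|\bm n|\}$ with coefficient of $z^{|\bm n|}$ equal to $1$ such that $\int\Phi_{\bm n,\bm m}(w)w^{-p}\,d\mu_j(w)=0$ for $p=-m_j,\dots,n_j-1$, $j=1,\dots,r$. When $(\bm n,\bm m)$ is normal, $\Phi^*_{\bm n,\bm m}$ denotes the unique Laurent polynomial in $\operatorname{span}\{z^p:-|\bm m|\le p\le|\bm n|\}$ with coefficient of $z^{-|\bm m|}$ equal to $1$ such that $\int\Phi^*_{\bm n,\bm m}(w)w^{-p}\,d\mu_j(w)=0$ for $p=-m_j+1,\dots,n_j$, $j=1,\dots,r$ (its existence and uniqueness is equivalent to normality of $(\bm n,\bm m)$). *)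

theory Defs
  imports "HOL-Analysis.Analysis"
begin

text \<open>Laurent polynomials are represented by their coefficient functions
  c :: int => complex; evaluation at w (w nonzero) of the finite sum over p in {lo..hi}.\<close>

definition laurent_eval :: "int \<Rightarrow> int \<Rightarrow> (int \<Rightarrow> complex) \<Rightarrow> complex \<Rightarrow> complex" where
  "laurent_eval lo hi c w = (\<Sum>p\<in>{lo..hi}. c p * w powi p)"

definition tot :: "nat \<Rightarrow> (nat \<Rightarrow> nat) \<Rightarrow> nat" where
  "tot r n = (\<Sum>j<r. n j)"

definition msupport :: "complex measure \<Rightarrow> complex set" where
  "msupport \<mu> = {z. \<forall>e>0. emeasure \<mu> (ball z e) > 0}"

definition circle_measure :: "complex measure \<Rightarrow> bool" where
  "circle_measure \<mu> \<longleftrightarrow> sets \<mu> = sets borel \<and> finite_measure \<mu>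
     \<and> emeasure \<mu> (- sphere 0 1) = 0 \<and> infinite (msupport \<mu>)"

text \<open>c is a type II multiple orthogonal Laurent polynomial candidate for (n,m):
  c in span{z^p : -|m| <= p <= |n|}, coefficient of z^{|n|} equal to 1,
  orthogonality for p = -m_j .. n_j - 1.\<close>
definition is_Phi :: "nat \<Rightarrow> (nat \<Rightarrow> complex measure) \<Rightarrow> (nat \<Rightarrow> nat) \<Rightarrow> (nat \<Rightarrow> nat)
                      \<Rightarrow> (int \<Rightarrow> complex) \<Rightarrow> bool" where
  "is_Phi r \<mu> n m c \<longleftrightarrow>
     (\<forall>p. p \<notin> {- int (tot r m)..int (tot r n)} \<longrightarrow> c p = 0)
     \<and> c (int (tot r n)) = 1
     \<and> (\<forall>j<r. \<forall>p\<in>{- int (m j)..int (n j) - 1}.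
          integral\<^sup>L (\<mu> j) (\<lambda>w. laurent_eval (- int (tot r m)) (int (tot r n)) c w * w powi (- p)) = 0)"

definition normal :: "nat \<Rightarrow> (nat \<Rightarrow> complex measure) \<Rightarrow> (nat \<Rightarrow> nat) \<Rightarrow> (nat \<Rightarrow> nat) \<Rightarrow> bool" where
  "normal r \<mu> n m \<longleftrightarrow> (\<exists>!c. is_Phi r \<mu> n m c)"

definition Phi :: "nat \<Rightarrow> (nat \<Rightarrow> complex measure) \<Rightarrow> (nat \<Rightarrow> nat) \<Rightarrow> (nat \<Rightarrow> nat) \<Rightarrow> (int \<Rightarrow> complex)" where
  "Phi r \<mu> n m = (THE c. is_Phi r \<mu> n m c)"

definition is_PhiStar :: "nat \<Rightarrow> (nat \<Rightarrow> complex measure) \<Rightarrow> (nat \<Rightarrow> nat) \<Rightarrow> (nat \<Rightarrow> nat)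
                      \<Rightarrow> (int \<Rightarrow> complex) \<Rightarrow> bool" where
  "is_PhiStar r \<mu> n m c \<longleftrightarrow>
     (\<forall>p. p \<notin> {- int (tot r m)..int (tot r n)} \<longrightarrow> c p = 0)
     \<and> c (- int (tot r m)) = 1
     \<and> (\<forall>j<r. \<forall>p\<in>{- int (m j) + 1..int (n j)}.
          integral\<^sup>L (\<mu> j) (\<lambda>w. laurent_eval (- int (tot r m)) (int (tot r n)) c w * w powi (- p)) = 0)"

definition PhiStar :: "nat \<Rightarrow> (nat \<Rightarrow> complex measure) \<Rightarrow> (nat \<Rightarrow> nat) \<Rightarrow> (nat \<Rightarrow> nat) \<Rightarrow> (int \<Rightarrow> complex)" where
  "PhiStar r \<mu> n m = (THE c. is_PhiStar r \<mu> n m c)"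

end

theory Submission
  imports Defs "Jordan_Normal_Form.Determinant"
begin

(* On coefficients, Phi |-> Phi^sharp is c |-> (k |-> cnj (c (-k))).  Since the moments
   of a measure on the unit circle satisfy cnj (c_q) = c_(-q), this map carries the
   orthogonality conditions of Phi_(n,m) exactly onto those of Phi*_(m,n): so (n,m) is
   normal iff Phi*_(m,n) is unique, and then Phi*_(m,n) = Phi_(n,m)^sharp.
   Phi*_(m,n) and Phi_(m,n) solve square linear systems in the moments with one
   coefficient normalized, so each is unique iff the homogeneous system in the remaining
   coefficients is trivial.  The moment matrix is Toeplitz in each block, and the two
   homogeneous systems differ only by the index shift of multiplication by z. *)

definition kernel_trivial :: "'k set \<Rightarrow> 'i set \<Rightarrow> ('i \<Rightarrow> 'k \<Rightarrow> 'a::semiring_0) \<Rightarrow> bool" where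
  "kernel_trivial S C A \<longleftrightarrow> (\<forall>x. (\<forall>i\<in>C. (\<Sum>k\<in>S. x k * A i k) = 0) \<longrightarrow> (\<forall>k\<in>S. x k = 0))"

lemma mat_mult_vec_surj_if_kernel_trivial:
  fixes M :: "'a::field mat"
  assumes M: "M \<in> carrier_mat N N"
    and ker: "\<And>v. v \<in> carrier_vec N \<Longrightarrow> M *\<^sub>v v = 0\<^sub>v N \<Longrightarrow> v = 0\<^sub>v N"
    and b: "b \<in> carrier_vec N"
  shows "\<exists>v\<in>carrier_vec N. M *\<^sub>v v = b"
proof -
  have "det M \<noteq> 0"
    using ker det_0_iff_vec_prod_zero_field[OF M] by blast
  from det_non_zero_imp_unit[OF M this, of "()"]
  obtain B where B: "B \<in> carrier_mat N N" "M * B = 1\<^sub>m N"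
    by (auto simp: Units_def ring_mat_def)
  have "M *\<^sub>v (B *\<^sub>v b) = b"
    using assoc_mult_mat_vec[OF M B(1) b, symmetric] B(2) b by simp
  then show ?thesis
    using B(1) b by (intro bexI[of _ "B *\<^sub>v b"]) simp_all
qed

lemma square_system_solvable_if_kernel_trivial:
  fixes A :: "'i \<Rightarrow> 'k \<Rightarrow> 'a::field"
  assumes S: "finite S" and C: "finite C" and card: "card S = card C"
    and ker: "kernel_trivial S C A"
  shows "\<exists>x. \<forall>i\<in>C. (\<Sum>k\<in>S. x k * A i k) = b i"
proof -
  define N where "N = card S"
  obtain fs where fs: "bij_betw fs {0..<N} S"
    using ex_bij_betw_nat_finite[OF S] N_def by blast
  obtain fc where fc: "bij_betw fc {0..<N} C"
    using ex_bij_betw_nat_finite[OF C] N_def card by auto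
  define M where "M = mat N N (\<lambda>(a, c). A (fc a) (fs c))"
  define vec_of :: "('k \<Rightarrow> 'a) \<Rightarrow> 'a vec" where "vec_of x = vec N (\<lambda>c. x (fs c))" for x
  define fun_of :: "'a vec \<Rightarrow> 'k \<Rightarrow> 'a" where "fun_of v k = v $ the_inv_into {0..<N} fs k" for v k
  have M: "M \<in> carrier_mat N N" by (simp add: M_def)
  have sum_eq: "(\<Sum>k\<in>S. x k * A (fc a) k) = (M *\<^sub>v vec_of x) $ a" if "a < N" for x a
    using that sum.reindex_bij_betw[OF fs, of "\<lambda>k. x k * A (fc a) k"]
    by (simp add: M_def vec_of_def mult_mat_vec_def scalar_prod_def mult.commute)
  have vec_of_fun_of: "vec_of (fun_of v) = v" if "v \<in> carrier_vec N" for v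
    using that fs by (intro eq_vecI) (auto simp: vec_of_def fun_of_def bij_betw_def the_inv_into_f_f)
  have C_eq: "C = fc ` {0..<N}"
    using fc by (simp add: bij_betw_def)
  have "\<exists>v\<in>carrier_vec N. M *\<^sub>v v = vec N (\<lambda>a. b (fc a))"
  proof (rule mat_mult_vec_surj_if_kernel_trivial[OF M _ vec_carrier])
    fix v assume v: "v \<in> carrier_vec N" "M *\<^sub>v v = 0\<^sub>v N"
    have "\<forall>i\<in>C. (\<Sum>k\<in>S. fun_of v k * A i k) = 0"
      using sum_eq vec_of_fun_of[OF v(1)] v(2) C_eq by auto
    then have "\<forall>k\<in>S. fun_of v k = 0"
      using ker by (simp add: kernel_trivial_def)
    then have "vec_of (fun_of v) = 0\<^sub>v N"
      using fs by (intro eq_vecI) (auto simp: vec_of_def bij_betw_def)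
    then show "v = 0\<^sub>v N" using vec_of_fun_of[OF v(1)] by simp
  qed
  then obtain v where v: "v \<in> carrier_vec N" "M *\<^sub>v v = vec N (\<lambda>a. b (fc a))" ..
  have "\<forall>i\<in>C. (\<Sum>k\<in>S. fun_of v k * A i k) = b i"
    using sum_eq vec_of_fun_of[OF v(1)] v(2) C_eq by auto
  then show ?thesis by blast
qed

definition normalized_solution ::
    "'k set \<Rightarrow> 'k \<Rightarrow> 'i set \<Rightarrow> ('i \<Rightarrow> 'k \<Rightarrow> 'a::semiring_1) \<Rightarrow> ('k \<Rightarrow> 'a) \<Rightarrow> bool" where
  "normalized_solution I t C A c \<longleftrightarrow>
     (\<forall>k. k \<notin> I \<longrightarrow> c k = 0) \<and> c t = 1 \<and> (\<forall>i\<in>C. (\<Sum>k\<in>I. c k * A i k) = 0)"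

lemma kernel_trivial_if_unique_normalized_solution:
  fixes A :: "'i \<Rightarrow> 'k \<Rightarrow> 'a::ring_1"
  assumes I: "finite I" "t \<in> I" and unique: "\<exists>!c. normalized_solution I t C A c"
  shows "kernel_trivial (I - {t}) C A"
  unfolding kernel_trivial_def
proof (intro allI impI)
  fix x assume x: "\<forall>i\<in>C. (\<Sum>k\<in>I - {t}. x k * A i k) = 0"
  obtain c where c: "normalized_solution I t C A c" using unique by blast
  define d where "d k = c k + (if k \<in> I - {t} then x k else 0)" for k
  have "normalized_solution I t C A d"
  proof -
    have "(\<Sum>k\<in>I. d k * A i k) = (\<Sum>k\<in>I. c k * A i k) + (\<Sum>k\<in>I - {t}. x k * A i k)" for i
      by (simp add: d_def distrib_right sum.distrib sum.remove[OF I])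
    then show ?thesis
      using c x by (auto simp: normalized_solution_def d_def)
  qed
  with c unique have "d = c" by blast
  then show "\<forall>k\<in>I - {t}. x k = 0"
    by (metis (mono_tags) add_cancel_left_right d_def)
qed

lemma normalized_solution_unique_if_kernel_trivial:
  fixes A :: "'i \<Rightarrow> 'k \<Rightarrow> 'a::ring_1"
  assumes I: "finite I" "t \<in> I" and ker: "kernel_trivial (I - {t}) C A"
    and c: "normalized_solution I t C A c" and d: "normalized_solution I t C A d"
  shows "c = d"
proof
  fix k
  have "(\<Sum>k\<in>I - {t}. (c k - d k) * A i k) = 0" if "i \<in> C" for i
  proof -
    have "(\<Sum>k\<in>I. (c k - d k) * A i k) = 0"
      using c d that by (simp add: normalized_solution_def left_diff_distrib sum_subtractf)
    then show ?thesis
      using c d by (simp add: normalized_solution_def sum.remove[OF I])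
  qed
  then have "\<forall>k\<in>I - {t}. c k - d k = 0"
    using ker[unfolded kernel_trivial_def, rule_format, of "\<lambda>k. c k - d k"] by blast
  then show "c k = d k"
    using c d by (cases "k \<in> I - {t}") (auto simp: normalized_solution_def)
qed

lemma ex_normalized_solution_if_kernel_trivial:
  fixes A :: "'i \<Rightarrow> 'k \<Rightarrow> 'a::field"
  assumes I: "finite I" "t \<in> I" and C: "finite C" and card: "card C = card (I - {t})"
    and ker: "kernel_trivial (I - {t}) C A"
  shows "\<exists>c. normalized_solution I t C A c"
proof -
  obtain x where x: "\<forall>i\<in>C. (\<Sum>k\<in>I - {t}. x k * A i k) = - A i t"
    using square_system_solvable_if_kernel_trivial[OF _ C card[symmetric] ker, where b = "\<lambda>i. - A i t"] I
    by blast
  define c where "c k = (if k \<in> I - {t} then x k else if k = t then 1 else 0)" for k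
  have "(\<Sum>k\<in>I. c k * A i k) = A i t + (\<Sum>k\<in>I - {t}. x k * A i k)" for i
    by (simp add: sum.remove[OF I] c_def)
  then have "normalized_solution I t C A c"
    using x I by (auto simp: normalized_solution_def c_def)
  then show ?thesis by blast
qed

lemma unique_normalized_solution_iff_kernel_trivial:
  fixes A :: "'i \<Rightarrow> 'k \<Rightarrow> 'a::field"
  assumes "finite I" "t \<in> I" "finite C" "card C = card (I - {t})"
  shows "(\<exists>!c. normalized_solution I t C A c) \<longleftrightarrow> kernel_trivial (I - {t}) C A"
  using assms kernel_trivial_if_unique_normalized_solution
    normalized_solution_unique_if_kernel_trivial ex_normalized_solution_if_kernel_trivial
  by metis

definition toeplitz :: "('j \<Rightarrow> int \<Rightarrow> 'a) \<Rightarrow> 'j \<times> int \<Rightarrow> int \<Rightarrow> 'a" where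
  "toeplitz f = (\<lambda>(j, p) k. f j (k - p))"

lemma kernel_trivial_toeplitz_shift:
  fixes f :: "'j \<Rightarrow> int \<Rightarrow> 'a::semiring_0"
  assumes "kernel_trivial S C (toeplitz f)"
  shows "kernel_trivial ((\<lambda>k. k + s) ` S) ((\<lambda>(j, p). (j, p + s)) ` C) (toeplitz f)"
  unfolding kernel_trivial_def
proof (intro allI impI)
  fix x
  assume x: "\<forall>i\<in>(\<lambda>(j, p). (j, p + s)) ` C. (\<Sum>k\<in>(\<lambda>k. k + s) ` S. x k * toeplitz f i k) = 0"
  have "(\<Sum>k\<in>S. x (k + s) * toeplitz f i k) = 0" if "i \<in> C" for i
  proof -
    obtain j p where i: "i = (j, p)" by fastforce
    have "(j, p + s) \<in> (\<lambda>(j, p). (j, p + s)) ` C"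
      using that i by force
    then show ?thesis
      using x i by (auto simp: sum.reindex inj_on_def toeplitz_def)
  qed
  then have "\<forall>k\<in>S. x (k + s) = 0"
    using assms[unfolded kernel_trivial_def, rule_format, of "\<lambda>k. x (k + s)"] by blast
  then show "\<forall>k\<in>(\<lambda>k. k + s) ` S. x k = 0" by blast
qed

lemma kernel_trivial_toeplitz_shift_iff:
  fixes f :: "'j \<Rightarrow> int \<Rightarrow> 'a::semiring_0"
  shows "kernel_trivial ((\<lambda>k. k + s) ` S) ((\<lambda>(j, p). (j, p + s)) ` C) (toeplitz f)
    \<longleftrightarrow> kernel_trivial S C (toeplitz f)"
proof
  assume "kernel_trivial ((\<lambda>k. k + s) ` S) ((\<lambda>(j, p). (j, p + s)) ` C) (toeplitz f)"
  from kernel_trivial_toeplitz_shift[OF this, of "- s"]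
  show "kernel_trivial S C (toeplitz f)"
    by (simp add: image_image case_prod_beta)
qed (rule kernel_trivial_toeplitz_shift)

definition moment :: "complex measure \<Rightarrow> int \<Rightarrow> complex" where
  "moment M q = (\<integral>w. w powi q \<partial>M)"

lemma borel_measurable_power_int [measurable (raw)]:
  fixes f :: "'a \<Rightarrow> 'b::real_normed_div_algebra"
  assumes "f \<in> borel_measurable M"
  shows "(\<lambda>x. f x powi q) \<in> borel_measurable M"
  using assms unfolding power_int_def by (cases "0 \<le> q") simp_all

lemma borel_measurable_cnj:
  assumes "f \<in> borel_measurable M"
  shows "(\<lambda>x. cnj (f x)) \<in> borel_measurable M"
proof -
  have "cnj \<in> borel_measurable borel"
    by (intro borel_measurable_continuous_onI continuous_on_cnj continuous_on_id)
  from measurable_compose[OF assms this] show ?thesis .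
qed

lemma AE_circle_measure_norm_eq_1:
  assumes "circle_measure M"
  shows "AE w in M. norm w = 1"
proof (rule AE_I')
  have "- sphere (0::complex) 1 \<in> sets M"
    using assms by (simp add: circle_measure_def closed_sphere borel_closed sets.compl_sets)
  then show "- sphere (0::complex) 1 \<in> null_sets M"
    using assms by (simp add: circle_measure_def null_sets_def)
  show "{w \<in> space M. norm w \<noteq> 1} \<subseteq> - sphere 0 1"
    by auto
qed

lemma circle_measure_borel_measurable_power_int:
  assumes "circle_measure M"
  shows "(\<lambda>w::complex. w powi q) \<in> borel_measurable M"
proof -
  have sets: "sets M = sets borel"
    using assms by (simp add: circle_measure_def)
  show ?thesis
    unfolding measurable_cong_sets[OF sets refl] by measurable
qed

lemma integrable_circle_measure_power_int:
  assumes "circle_measure M"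
  shows "integrable M (\<lambda>w. w powi q)"
proof -
  interpret finite_measure M
    using assms by (simp add: circle_measure_def)
  show ?thesis
  proof (rule integrable_const_bound[where B = 1])
    show "AE w in M. norm (w powi q) \<le> 1"
      using AE_circle_measure_norm_eq_1[OF assms] by eventually_elim (simp add: norm_power_int)
  qed (rule circle_measure_borel_measurable_power_int[OF assms])
qed

lemma integral_laurent_eval_mult_power_int:
  assumes M: "circle_measure M"
  shows "(\<integral>w. laurent_eval lo hi c w * w powi (- p) \<partial>M) = (\<Sum>k\<in>{lo..hi}. c k * moment M (k - p))"
proof -
  note powi_measurable = circle_measure_borel_measurable_power_int[OF M]
  have "(\<integral>w. laurent_eval lo hi c w * w powi (- p) \<partial>M) = (\<integral>w. (\<Sum>k\<in>{lo..hi}. c k * w powi (k - p)) \<partial>M)"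
  proof (rule integral_cong_AE)
    show "AE w in M. laurent_eval lo hi c w * w powi (- p) = (\<Sum>k\<in>{lo..hi}. c k * w powi (k - p))"
      using AE_circle_measure_norm_eq_1[OF M]
    proof eventually_elim
      case (elim w)
      then have "w \<noteq> 0" by auto
      then show ?case
        by (simp add: laurent_eval_def sum_distrib_right mult.assoc power_int_add[symmetric])
    qed
  qed (unfold laurent_eval_def, use powi_measurable in measurable)+
  also have "\<dots> = (\<Sum>k\<in>{lo..hi}. c k * moment M (k - p))"
    by (simp add: integrable_circle_measure_power_int[OF M] moment_def)
  finally show ?thesis .
qed

lemma cnj_moment:
  assumes M: "circle_measure M"
  shows "cnj (moment M q) = moment M (- q)"
proof -
  have "cnj (moment M q) = (\<integral>w. cnj (w powi q) \<partial>M)"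
    unfolding moment_def by (rule Bochner_Integration.integral_cnj[symmetric])
  also have "\<dots> = moment M (- q)"
    unfolding moment_def
  proof (rule integral_cong_AE)
    show "AE w in M. cnj (w powi q) = w powi (- q)"
      using AE_circle_measure_norm_eq_1[OF M]
    proof eventually_elim
      case (elim w)
      then have "w * cnj w = 1"
        by (simp add: complex_norm_square[symmetric])
      then have "cnj w = inverse w"
        by (simp add: inverse_unique)
      then show ?case
        by (simp add: power_int_minus power_int_inverse)
    qed
  qed (intro borel_measurable_cnj circle_measure_borel_measurable_power_int[OF M])+
  finally show ?thesis .
qed

definition sharp :: "(int \<Rightarrow> complex) \<Rightarrow> int \<Rightarrow> complex" where
  "sharp c k = cnj (c (- k))"

lemma sharp_sharp [simp]: "sharp (sharp c) = c"
  by (simp add: sharp_def fun_eq_iff)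

lemma sharp_eq_0_outside_iff:
  "(\<forall>k. k \<notin> {lo..hi} \<longrightarrow> sharp c k = 0) \<longleftrightarrow> (\<forall>k. k \<notin> {- hi..- lo} \<longrightarrow> c k = 0)"
  unfolding sharp_def by (metis atLeastAtMost_iff complex_cnj_zero_iff minus_minus neg_le_iff_le)

lemma sum_atLeastAtMost_reflect:
  "(\<Sum>k\<in>{- hi..- lo}. f k) = (\<Sum>k\<in>{lo..hi::int}. f (- k))"
  by (rule sum.reindex_bij_witness[where i = uminus and j = uminus]) auto

lemma cnj_laurent_eval_inverse_cnj:
  "cnj (laurent_eval lo hi c (1 / cnj z)) = laurent_eval (- hi) (- lo) (sharp c) z"
proof -
  have "cnj (laurent_eval lo hi c (1 / cnj z)) = (\<Sum>k\<in>{lo..hi}. cnj (c k) * z powi (- k))"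
    unfolding laurent_eval_def by (simp add: power_int_minus power_int_inverse divide_inverse)
  then show ?thesis
    unfolding laurent_eval_def sum_atLeastAtMost_reflect by (simp add: sharp_def)
qed

lemma integral_laurent_eval_sharp:
  assumes M: "circle_measure M"
  shows "(\<integral>w. laurent_eval lo hi (sharp c) w * w powi (- p) \<partial>M)
    = cnj (\<integral>w. laurent_eval (- hi) (- lo) c w * w powi p \<partial>M)"
  using integral_laurent_eval_mult_power_int[OF M, of lo hi "sharp c" p]
    integral_laurent_eval_mult_power_int[OF M, of "- hi" "- lo" c "- p"]
  by (simp add: sum_atLeastAtMost_reflect sharp_def cnj_moment[OF M] algebra_simps)

lemma is_PhiStar_sharp_iff:
  assumes circle: "\<And>j. j < r \<Longrightarrow> circle_measure (\<mu> j)"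
  shows "is_PhiStar r \<mu> m n (sharp c) \<longleftrightarrow> is_Phi r \<mu> n m c"
proof -
  have normalization: "sharp c (- int (tot r n)) = 1 \<longleftrightarrow> c (int (tot r n)) = 1"
    by (simp add: sharp_def)
  have orthogonality_j: "(\<forall>p\<in>{- int (n j) + 1..int (m j)}.
      (\<integral>w. laurent_eval (- int (tot r n)) (int (tot r m)) (sharp c) w * w powi (- p) \<partial>\<mu> j) = 0)
    \<longleftrightarrow> (\<forall>p\<in>{- int (m j)..int (n j) - 1}.
      (\<integral>w. laurent_eval (- int (tot r m)) (int (tot r n)) c w * w powi (- p) \<partial>\<mu> j) = 0)"
    if "j < r" for j
  proof -
    have "{- int (m j)..int (n j) - 1} = uminus ` {- int (n j) + 1..int (m j)}"
      by simp
    then show ?thesis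
      by (simp add: integral_laurent_eval_sharp[OF circle[OF that]] del: image_uminus_atLeastAtMost)
  qed
  then have orthogonality: "(\<forall>j<r. \<forall>p\<in>{- int (n j) + 1..int (m j)}.
      (\<integral>w. laurent_eval (- int (tot r n)) (int (tot r m)) (sharp c) w * w powi (- p) \<partial>\<mu> j) = 0)
    \<longleftrightarrow> (\<forall>j<r. \<forall>p\<in>{- int (m j)..int (n j) - 1}.
      (\<integral>w. laurent_eval (- int (tot r m)) (int (tot r n)) c w * w powi (- p) \<partial>\<mu> j) = 0)"
    by blast
  show ?thesis
    unfolding is_PhiStar_def is_Phi_def sharp_eq_0_outside_iff normalization orthogonality
    by simp
qed

lemma Ex1_involution_iff:
  assumes "\<And>x. f (f x) = x"
  shows "(\<exists>!x. P (f x)) \<longleftrightarrow> (\<exists>!y. P y)"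
proof
  assume "\<exists>!x. P (f x)"
  then obtain x where x: "P (f x)" and unique: "\<And>y. P (f y) \<Longrightarrow> y = x"
    by blast
  show "\<exists>!y. P y"
  proof (rule ex1I)
    show "P (f x)" by (rule x)
    show "y = f x" if "P y" for y
      using unique[of "f y"] that assms by metis
  qed
next
  assume "\<exists>!y. P y"
  then obtain y where y: "P y" and unique: "\<And>x. P x \<Longrightarrow> x = y"
    by blast
  show "\<exists>!x. P (f x)"
  proof (rule ex1I)
    show "P (f (f y))" using y assms by simp
    show "x = f y" if "P (f x)" for x
      using unique[OF that] assms by metis
  qed
qed

lemma normal_iff_unique_PhiStar:
  assumes "\<And>j. j < r \<Longrightarrow> circle_measure (\<mu> j)"
  shows "normal r \<mu> n m \<longleftrightarrow> (\<exists>!d. is_PhiStar r \<mu> m n d)"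
proof -
  have "normal r \<mu> n m \<longleftrightarrow> (\<exists>!c. is_PhiStar r \<mu> m n (sharp c))"
    unfolding normal_def using is_PhiStar_sharp_iff[of r \<mu> m n, OF assms] by simp
  also have "\<dots> \<longleftrightarrow> (\<exists>!d. is_PhiStar r \<mu> m n d)"
    by (rule Ex1_involution_iff) simp
  finally show ?thesis .
qed

lemma PhiStar_eq_sharp_Phi:
  assumes circle: "\<And>j. j < r \<Longrightarrow> circle_measure (\<mu> j)" and normal: "normal r \<mu> n m"
  shows "PhiStar r \<mu> m n = sharp (Phi r \<mu> n m)"
proof -
  have "is_Phi r \<mu> n m (Phi r \<mu> n m)"
    using normal unfolding normal_def Phi_def by (rule theI')
  then have "is_PhiStar r \<mu> m n (sharp (Phi r \<mu> n m))"
    using is_PhiStar_sharp_iff[of r \<mu> m n, OF circle] by blast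
  moreover have "\<exists>!d. is_PhiStar r \<mu> m n d"
    using normal_iff_unique_PhiStar[of r \<mu> n m, OF circle] normal by blast
  ultimately show ?thesis
    unfolding PhiStar_def by (rule the1_equality[rotated])
qed

definition moment_matrix :: "(nat \<Rightarrow> complex measure) \<Rightarrow> nat \<times> int \<Rightarrow> int \<Rightarrow> complex" where
  "moment_matrix \<mu> = toeplitz (\<lambda>j. moment (\<mu> j))"

definition Phi_conditions :: "nat \<Rightarrow> (nat \<Rightarrow> nat) \<Rightarrow> (nat \<Rightarrow> nat) \<Rightarrow> (nat \<times> int) set" where
  "Phi_conditions r n m = (SIGMA j:{..<r}. {- int (m j)..int (n j) - 1})"

definition PhiStar_conditions :: "nat \<Rightarrow> (nat \<Rightarrow> nat) \<Rightarrow> (nat \<Rightarrow> nat) \<Rightarrow> (nat \<times> int) set" where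
  "PhiStar_conditions r n m = (SIGMA j:{..<r}. {- int (m j) + 1..int (n j)})"

lemma card_Phi_conditions: "card (Phi_conditions r n m) = tot r n + tot r m"
  by (simp add: Phi_conditions_def card_SigmaI nat_add_distrib tot_def sum.distrib)

lemma PhiStar_conditions_shift:
  "PhiStar_conditions r n m = (\<lambda>(j, p). (j, p + 1)) ` Phi_conditions r n m"
proof -
  have "(\<lambda>(j, p). (j, p + 1)) ` Sigma A B = (SIGMA j:A. (\<lambda>p. p + 1) ` B j)"
    for A :: "nat set" and B :: "nat \<Rightarrow> int set"
    by force
  then show ?thesis
    unfolding PhiStar_conditions_def Phi_conditions_def by simp
qed

lemma card_PhiStar_conditions: "card (PhiStar_conditions r n m) = tot r n + tot r m"
  unfolding PhiStar_conditions_shift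
  by (subst card_image) (auto simp: inj_on_def card_Phi_conditions)

lemma is_Phi_eq_normalized_solution:
  assumes "\<And>j. j < r \<Longrightarrow> circle_measure (\<mu> j)"
  shows "is_Phi r \<mu> n m = normalized_solution {- int (tot r m)..int (tot r n)} (int (tot r n))
    (Phi_conditions r n m) (moment_matrix \<mu>)"
  using integral_laurent_eval_mult_power_int[OF assms]
  by (auto simp: fun_eq_iff is_Phi_def normalized_solution_def Phi_conditions_def moment_matrix_def
      toeplitz_def)

lemma is_PhiStar_eq_normalized_solution:
  assumes "\<And>j. j < r \<Longrightarrow> circle_measure (\<mu> j)"
  shows "is_PhiStar r \<mu> n m = normalized_solution {- int (tot r m)..int (tot r n)} (- int (tot r m))
    (PhiStar_conditions r n m) (moment_matrix \<mu>)"
  using integral_laurent_eval_mult_power_int[OF assms]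
  by (auto simp: fun_eq_iff is_PhiStar_def normalized_solution_def PhiStar_conditions_def
      moment_matrix_def toeplitz_def)

lemma normal_iff_kernel_trivial:
  assumes "\<And>j. j < r \<Longrightarrow> circle_measure (\<mu> j)"
  shows "normal r \<mu> n m \<longleftrightarrow>
    kernel_trivial {- int (tot r m)..int (tot r n) - 1} (Phi_conditions r n m) (moment_matrix \<mu>)"
proof -
  have I: "finite {- int (tot r m)..int (tot r n)}" "int (tot r n) \<in> {- int (tot r m)..int (tot r n)}"
    by simp_all
  have C: "finite (Phi_conditions r n m)"
    by (simp add: Phi_conditions_def)
  have S: "{- int (tot r m)..int (tot r n)} - {int (tot r n)} = {- int (tot r m)..int (tot r n) - 1}"
    by auto
  have card: "card (Phi_conditions r n m) = card ({- int (tot r m)..int (tot r n)} - {int (tot r n)})"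
    unfolding S card_Phi_conditions by simp
  show ?thesis
    using unique_normalized_solution_iff_kernel_trivial[OF I C card]
    by (simp add: normal_def is_Phi_eq_normalized_solution[OF assms] S)
qed

lemma unique_PhiStar_iff_kernel_trivial:
  assumes "\<And>j. j < r \<Longrightarrow> circle_measure (\<mu> j)"
  shows "(\<exists>!c. is_PhiStar r \<mu> n m c) \<longleftrightarrow>
    kernel_trivial {- int (tot r m) + 1..int (tot r n)} (PhiStar_conditions r n m) (moment_matrix \<mu>)"
proof -
  have I: "finite {- int (tot r m)..int (tot r n)}" "- int (tot r m) \<in> {- int (tot r m)..int (tot r n)}"
    by simp_all
  have C: "finite (PhiStar_conditions r n m)"
    by (simp add: PhiStar_conditions_def)
  have S: "{- int (tot r m)..int (tot r n)} - {- int (tot r m)} = {- int (tot r m) + 1..int (tot r n)}"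
    by auto
  have card: "card (PhiStar_conditions r n m) = card ({- int (tot r m)..int (tot r n)} - {- int (tot r m)})"
    unfolding S card_PhiStar_conditions by simp
  show ?thesis
    using unique_normalized_solution_iff_kernel_trivial[OF I C card]
    by (simp add: is_PhiStar_eq_normalized_solution[OF assms] S)
qed

lemma kernel_trivial_PhiStar_iff_Phi:
  "kernel_trivial {- int (tot r m) + 1..int (tot r n)} (PhiStar_conditions r n m) (moment_matrix \<mu>)
    \<longleftrightarrow> kernel_trivial {- int (tot r m)..int (tot r n) - 1} (Phi_conditions r n m) (moment_matrix \<mu>)"
  using kernel_trivial_toeplitz_shift_iff[of 1 "{- int (tot r m)..int (tot r n) - 1}"
      "Phi_conditions r n m" "\<lambda>j. moment (\<mu> j)"]
  by (simp add: PhiStar_conditions_shift moment_matrix_def add.commute)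

theorem proposition2p9:
  fixes r :: nat and \<mu> :: "nat \<Rightarrow> complex measure" and n m :: "nat \<Rightarrow> nat"
  assumes "\<And>j. j < r \<Longrightarrow> circle_measure (\<mu> j)"
  shows "(normal r \<mu> n m \<longleftrightarrow> normal r \<mu> m n)
    \<and> (normal r \<mu> n m \<longrightarrow>
        (\<forall>z::complex. z \<noteq> 0 \<longrightarrow>
           cnj (laurent_eval (- int (tot r m)) (int (tot r n)) (Phi r \<mu> n m) (1 / cnj z))
           = laurent_eval (- int (tot r n)) (int (tot r m)) (PhiStar r \<mu> m n) z))"
proof
  have "normal r \<mu> n m \<longleftrightarrow> (\<exists>!d. is_PhiStar r \<mu> m n d)"
    by (rule normal_iff_unique_PhiStar[of r \<mu> n m, OF assms])
  also have "\<dots> \<longleftrightarrow> kernel_trivial {- int (tot r n) + 1..int (tot r m)}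
      (PhiStar_conditions r m n) (moment_matrix \<mu>)"
    by (rule unique_PhiStar_iff_kernel_trivial[of r \<mu> m n, OF assms])
  also have "\<dots> \<longleftrightarrow> kernel_trivial {- int (tot r n)..int (tot r m) - 1}
      (Phi_conditions r m n) (moment_matrix \<mu>)"
    by (rule kernel_trivial_PhiStar_iff_Phi)
  also have "\<dots> \<longleftrightarrow> normal r \<mu> m n"
    by (rule normal_iff_kernel_trivial[of r \<mu> m n, OF assms, symmetric])
  finally show "normal r \<mu> n m \<longleftrightarrow> normal r \<mu> m n" .
next
  show "normal r \<mu> n m \<longrightarrow>
        (\<forall>z::complex. z \<noteq> 0 \<longrightarrow>
           cnj (laurent_eval (- int (tot r m)) (int (tot r n)) (Phi r \<mu> n m) (1 / cnj z))
           = laurent_eval (- int (tot r n)) (int (tot r m)) (PhiStar r \<mu> m n) z)"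
    using PhiStar_eq_sharp_Phi[of r \<mu> n m, OF assms]
      cnj_laurent_eval_inverse_cnj[of "- int (tot r m)" "int (tot r n)"]
    by simp
qed

end
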